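(* Let $a,b,c,d\in\mathbb C$ and $$f=a(2x_1-x_2-x_3)(2x_2-x_3-x_1)(2x_3-x_1-x_2)+b(x_1-x_2)(x_2-x_3)(x_3-x_1)+c(x_1+x_2+x_3)^3+d(x_1^3+x_2^3+x_3^3-3x_1x_2x_3).$$ Then $f$ is completely reducible (a product of three linear forms) if and only if $a=b=c=0$ or $(27a^2+b^2)c+d^3=0$. In the first case, $$f=d(x_1+x_2+x_3)(x_1+\omega x_2+\omega^2x_3)(x_1+\omega^2x_2+\omega x_3).$$ In the second case, there exist $\alpha_1,\alpha_2,\gamma\in\mathbb C$ with $$\alpha_1^3=9a-i\sqrt3\,b,\quad \alpha_2^3=9a+i\sqrt3\,b,\quad -\alpha_1\alpha_2\gamma=3d,\quad \gamma^3=9c,$$ and for any such $\alpha_1,\alpha_2,\gamma$ we have $9f=A_xB_xC_x$, where $$A_x=\alpha_1(x_1+\omega^2x_2+\omega x_3)+\gamma(x_1+x_2+x_3)+\alpha_2(x_1+\omega x_2+\omega^2x_3),$$ $$B_x=\alpha_1(\omega^2x_1+\omega x_2+x_3)+\gamma(x_1+x_2+x_3)+\alpha_2(\omega x_1+\omega^2x_2+x_3),$$ $$C_x=\alpha_1(\omega x_1+x_2+\omega^2x_3)+\gamma(x_1+x_2+x_3)+\alpha_2(\omega^2x_1+x_2+\omega x_3).$$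
   Context: $\omega=e^{2\pi i/3}$. Every ternary cubic form over $\mathbb C$ invariant under even permutations of $x_1,x_2,x_3$ can be written in the displayed form. *)

theory Defs
  imports Complex_Main
begin

definition omega :: complex where
  "omega = exp (2 * pi * \<i> / 3)"

definition cubicf :: "complex \<Rightarrow> complex \<Rightarrow> complex \<Rightarrow> complex \<Rightarrow>
    complex \<Rightarrow> complex \<Rightarrow> complex \<Rightarrow> complex" where
  "cubicf a b c d x1 x2 x3 =
     a * (2*x1 - x2 - x3) * (2*x2 - x3 - x1) * (2*x3 - x1 - x2)
   + b * (x1 - x2) * (x2 - x3) * (x3 - x1)
   + c * (x1 + x2 + x3) ^ 3
   + d * (x1 ^ 3 + x2 ^ 3 + x3 ^ 3 - 3 * x1 * x2 * x3)"

text \<open>A ternary form over C is completely reducible if it is a product of three linear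
  forms. Since C is infinite, equality of polynomials is equality as functions.\<close>
definition completely_reducible ::
    "(complex \<Rightarrow> complex \<Rightarrow> complex \<Rightarrow> complex) \<Rightarrow> bool" where
  "completely_reducible F \<longleftrightarrow>
     (\<exists>u1 u2 u3 v1 v2 v3 w1 w2 w3 :: complex. \<forall>x1 x2 x3.
        F x1 x2 x3 = (u1*x1 + u2*x2 + u3*x3) * (v1*x1 + v2*x2 + v3*x3) * (w1*x1 + w2*x2 + w3*x3))"

end

theory Submission
  imports Defs
begin

text \<open>In the coordinates \<open>X = x1 + \<omega> x2 + \<omega>\<^sup>2 x3\<close>, \<open>Y = x1 + \<omega>\<^sup>2 x2 + \<omega> x3\<close>,
  \<open>Z = x1 + x2 + x3\<close>, which diagonalise the cyclic shift of the variables, the form becomes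
  \<open>9 f = (9a + i\<surd>3 b) X\<^sup>3 + (9a - i\<surd>3 b) Y\<^sup>3 + 9c Z\<^sup>3 + 9d XYZ\<close>.
  If a diagonal cubic \<open>p X\<^sup>3 + q Y\<^sup>3 + r Z\<^sup>3 + m XYZ\<close> with \<open>p \<noteq> 0\<close> is a product of
  linear forms, dividing each factor by its \<open>X\<close>-coefficient leaves ratios \<open>s\<^sub>i, t\<^sub>i\<close> whose
  elementary symmetric functions are read off from the coefficients; they force
  \<open>27 pqr + m\<^sup>3 = 0\<close>. Conversely, if \<open>p, q, r\<close> are the cubes of \<open>e\<^sub>2, e\<^sub>1, g\<close> with
  \<open>m = -3 e\<^sub>1 e\<^sub>2 g\<close>, the cubic is \<open>u\<^sup>3 + v\<^sup>3 + w\<^sup>3 - 3uvw\<close> for \<open>u = e\<^sub>1 Y\<close>, \<open>v = g Z\<close>,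
  \<open>w = e\<^sub>2 X\<close>, which splits over the cube roots of unity.\<close>

lemma omega_eq_Complex: "omega = Complex (-1/2) (sqrt 3 / 2)"
proof -
  have "omega = cis (2*pi/3)"
    unfolding omega_def cis_conv_exp by (simp add: field_simps)
  then show ?thesis
    by (simp add: complex_eq_iff cos_120 sin_120)
qed

lemma omega_squared_plus_omega_plus_1: "omega^2 + omega + 1 = 0"
  by (simp add: omega_eq_Complex complex_eq_iff power2_eq_square)

lemma i_sqrt3_eq_1_plus_2_omega: "\<i> * complex_of_real (sqrt 3) = 1 + 2*omega"
  by (simp add: omega_eq_Complex complex_eq_iff)

lemma i_sqrt3_squared: "(\<i> * complex_of_real (sqrt 3))^2 = -3"
  by (simp add: power_mult_distrib flip: of_real_power)

lemma complex_nth_root_exists: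
  assumes "n > 0"
  shows "\<exists>y::complex. y^n = z"
proof (cases "z = 0")
  case True
  with assms show ?thesis by (intro exI[of _ 0]) simp
next
  case False
  have "(1::complex) \<in> {y. y^n = 1}" by simp
  from bij_betw_apply[OF bij_betw_nth_root_unity[OF False assms] this]
  show ?thesis by blast
qed

lemma diagonal_cubic_factorization:
  fixes w :: "'a::idom"
  assumes "w^2 + w + 1 = 0"
  shows "e2^3*X^3 + e1^3*Y^3 + g^3*Z^3 - 3*e1*e2*g*X*Y*Z
       = (e1*Y + g*Z + e2*X) * (w^2*e1*Y + g*Z + w*e2*X) * (w*e1*Y + g*Z + w^2*e2*X)"
  using assms by algebra

lemma diagonal_cubic_product_coeffs:
  fixes U1 U2 U3 V1 V2 V3 W1 W2 W3 p q r m :: "'a::field_char_0"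
  assumes H: "\<And>X Y Z. p*X^3 + q*Y^3 + r*Z^3 + m*X*Y*Z
                = (U1*X + V1*Y + W1*Z) * (U2*X + V2*Y + W2*Z) * (U3*X + V3*Y + W3*Z)"
  shows "U1*U2*U3 = p" "V1*V2*V3 = q" "W1*W2*W3 = r"
    "U1*U2*V3 + U1*V2*U3 + V1*U2*U3 = 0"
    "U1*V2*V3 + V1*U2*V3 + V1*V2*U3 = 0"
    "U1*U2*W3 + U1*W2*U3 + W1*U2*U3 = 0"
    "U1*W2*W3 + W1*U2*W3 + W1*W2*U3 = 0"
    "V1*V2*W3 + V1*W2*V3 + W1*V2*V3 = 0"
    "V1*W2*W3 + W1*V2*W3 + W1*W2*V3 = 0"
    "U1*V2*W3 + U1*W2*V3 + V1*U2*W3 + V1*W2*U3 + W1*U2*V3 + W1*V2*U3 = m"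
proof -
  show U: "U1*U2*U3 = p" and V: "V1*V2*V3 = q" and W: "W1*W2*W3 = r"
    using H[of 1 0 0] H[of 0 1 0] H[of 0 0 1] by simp_all
  have UV: "p + q = (U1 + V1)*(U2 + V2)*(U3 + V3)" "p - q = (U1 - V1)*(U2 - V2)*(U3 - V3)"
    using H[of 1 1 0] H[of 1 "-1" 0] by simp_all
  have UW: "p + r = (U1 + W1)*(U2 + W2)*(U3 + W3)" "p - r = (U1 - W1)*(U2 - W2)*(U3 - W3)"
    using H[of 1 0 1] H[of 1 0 "-1"] by simp_all
  have VW: "q + r = (V1 + W1)*(V2 + W2)*(V3 + W3)" "q - r = (V1 - W1)*(V2 - W2)*(V3 - W3)"
    using H[of 0 1 1] H[of 0 1 "-1"] by simp_all
  have half: "z = 0" if "2 * z = 0" for z :: 'a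
    using that by simp
  show UV1: "U1*U2*V3 + U1*V2*U3 + V1*U2*U3 = 0"
    by (rule half) (use UV in \<open>unfold U[symmetric] V[symmetric], algebra\<close>)
  show UV2: "U1*V2*V3 + V1*U2*V3 + V1*V2*U3 = 0"
    by (rule half) (use UV in \<open>unfold U[symmetric] V[symmetric], algebra\<close>)
  show UW1: "U1*U2*W3 + U1*W2*U3 + W1*U2*U3 = 0"
    by (rule half) (use UW in \<open>unfold U[symmetric] W[symmetric], algebra\<close>)
  show UW2: "U1*W2*W3 + W1*U2*W3 + W1*W2*U3 = 0"
    by (rule half) (use UW in \<open>unfold U[symmetric] W[symmetric], algebra\<close>)
  show VW1: "V1*V2*W3 + V1*W2*V3 + W1*V2*V3 = 0"
    by (rule half) (use VW in \<open>unfold V[symmetric] W[symmetric], algebra\<close>)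
  show VW2: "V1*W2*W3 + W1*V2*W3 + W1*W2*V3 = 0"
    by (rule half) (use VW in \<open>unfold V[symmetric] W[symmetric], algebra\<close>)
  have "p + q + r + m = (U1 + V1 + W1)*(U2 + V2 + W2)*(U3 + V3 + W3)"
    using H[of 1 1 1] by simp
  then show "U1*V2*W3 + U1*W2*V3 + V1*U2*W3 + V1*W2*U3 + W1*U2*V3 + W1*V2*U3 = m"
    using UV1 UV2 UW1 UW2 VW1 VW2 unfolding U[symmetric] V[symmetric] W[symmetric] by algebra
qed

lemma cube_of_paired_sum:
  fixes s1 s2 s3 t1 t2 t3 :: "'a::field_char_0"
  assumes "s1 + s2 + s3 = 0" "s1*s2 + s1*s3 + s2*s3 = 0"
    "t1 + t2 + t3 = 0" "t1*t2 + t1*t3 + t2*t3 = 0"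
    "s1*s2*t3 + s1*s3*t2 + s2*s3*t1 = 0" "s1*t2*t3 + s2*t1*t3 + s3*t1*t2 = 0"
  shows "(s1*t1 + s2*t2 + s3*t3)^3 = 27 * (s1*s2*s3) * (t1*t2*t3)"
  using assms by algebra

lemma diagonal_cubic_product_condition_normalized:
  fixes U1 U2 U3 V1 V2 V3 W1 W2 W3 p q r m :: "'a::field_char_0"
  assumes H: "\<And>X Y Z. p*X^3 + q*Y^3 + r*Z^3 + m*X*Y*Z
                = (U1*X + V1*Y + W1*Z) * (U2*X + V2*Y + W2*Z) * (U3*X + V3*Y + W3*Z)"
    and "p \<noteq> 0"
  shows "27*p*q*r + m^3 = 0"
proof -
  note coeffs = diagonal_cubic_product_coeffs[OF H]
  have U: "U1 \<noteq> 0" "U2 \<noteq> 0" "U3 \<noteq> 0"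
    using coeffs(1) \<open>p \<noteq> 0\<close> by auto
  define s1 s2 s3 t1 t2 t3 where "s1 = V1/U1" "s2 = V2/U2" "s3 = V3/U3"
    "t1 = W1/U1" "t2 = W2/U2" "t3 = W3/U3"
  have VW: "V1 = s1*U1" "V2 = s2*U2" "V3 = s3*U3" "W1 = t1*U1" "W2 = t2*U2" "W3 = t3*U3"
    using U by (simp_all add: s1_s2_s3_t1_t2_t3_def)
  have p: "p = U1*U2*U3"
    using coeffs(1) by simp
  have "p * (s1 + s2 + s3) = 0" "p * (s1*s2 + s1*s3 + s2*s3) = 0"
    "p * (t1 + t2 + t3) = 0" "p * (t1*t2 + t1*t3 + t2*t3) = 0"
    "p * (s1*s2*t3 + s1*s3*t2 + s2*s3*t1) = 0" "p * (s1*t2*t3 + s2*t1*t3 + s3*t1*t2) = 0"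
    using coeffs(4-9) unfolding p VW by algebra+
  then have esym: "s1 + s2 + s3 = 0" "s1*s2 + s1*s3 + s2*s3 = 0"
    "t1 + t2 + t3 = 0" "t1*t2 + t1*t3 + t2*t3 = 0"
    "s1*s2*t3 + s1*s3*t2 + s2*s3*t1 = 0" "s1*t2*t3 + s2*t1*t3 + s3*t1*t2 = 0"
    using \<open>p \<noteq> 0\<close> by simp_all
  have "q = p * (s1*s2*s3)"
    using coeffs(2) unfolding p VW by (simp add: ac_simps)
  moreover have "r = p * (t1*t2*t3)"
    using coeffs(3) unfolding p VW by (simp add: ac_simps)
  moreover have "m = p * ((s1 + s2 + s3)*(t1 + t2 + t3) - (s1*t1 + s2*t2 + s3*t3))"
    using coeffs(10) unfolding p VW by (simp add: algebra_simps)
  then have "m = - p * (s1*t1 + s2*t2 + s3*t3)"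
    unfolding esym(1,3) by (simp add: algebra_simps)
  ultimately show ?thesis
    using cube_of_paired_sum[OF esym] by algebra
qed

lemma diagonal_cubic_product_condition:
  fixes U1 U2 U3 V1 V2 V3 W1 W2 W3 p q r m :: "'a::field_char_0"
  assumes H: "\<And>X Y Z. p*X^3 + q*Y^3 + r*Z^3 + m*X*Y*Z
                = (U1*X + V1*Y + W1*Z) * (U2*X + V2*Y + W2*Z) * (U3*X + V3*Y + W3*Z)"
  shows "(p = 0 \<and> q = 0 \<and> r = 0) \<or> 27*p*q*r + m^3 = 0"
proof -
  consider "p \<noteq> 0" | "q \<noteq> 0" | "r \<noteq> 0" | "p = 0 \<and> q = 0 \<and> r = 0"
    by blast
  then show ?thesis
  proof cases
    case 1
    then show ?thesis
      using diagonal_cubic_product_condition_normalized[OF H] by blast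
  next
    case 2
    have "q*Y^3 + p*X^3 + r*Z^3 + m*Y*X*Z
        = (V1*Y + U1*X + W1*Z) * (V2*Y + U2*X + W2*Z) * (V3*Y + U3*X + W3*Z)" for X Y Z
      using H[of X Y Z] by (simp add: ac_simps)
    from diagonal_cubic_product_condition_normalized[OF this 2] show ?thesis
      by (simp add: ac_simps)
  next
    case 3
    have "r*Z^3 + q*Y^3 + p*X^3 + m*Z*Y*X
        = (W1*Z + V1*Y + U1*X) * (W2*Z + V2*Y + U2*X) * (W3*Z + V3*Y + U3*X)" for X Y Z
      using H[of X Y Z] by (simp add: ac_simps)
    from diagonal_cubic_product_condition_normalized[OF this 3] show ?thesis
      by (simp add: ac_simps)
  qed simp
qed

lemma linear_form_fourier_coordinates:
  "3 * (u1*x1 + u2*x2 + u3*x3) =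
     (u1 + omega^2*u2 + omega*u3) * (x1 + omega*x2 + omega^2*x3)
   + (u1 + omega*u2 + omega^2*u3) * (x1 + omega^2*x2 + omega*x3)
   + (u1 + u2 + u3) * (x1 + x2 + x3)"
  using omega_squared_plus_omega_plus_1 by algebra

lemma fourier_coordinates_surj:
  "\<exists>x1 x2 x3. x1 + omega*x2 + omega^2*x3 = X \<and> x1 + omega^2*x2 + omega*x3 = Y \<and> x1 + x2 + x3 = Z"
proof -
  define x1 x2 x3 where "x1 = (Z + X + Y)/3" "x2 = (Z + omega^2*X + omega*Y)/3"
    "x3 = (Z + omega*X + omega^2*Y)/3"
  have "x1 + omega*x2 + omega^2*x3 = X" "x1 + omega^2*x2 + omega*x3 = Y" "x1 + x2 + x3 = Z"
    unfolding x1_x2_x3_def using omega_squared_plus_omega_plus_1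
    by (simp_all add: field_simps, algebra+)
  then show ?thesis by blast
qed

lemma cubicf_fourier_coordinates:
  "9 * cubicf a b c d x1 x2 x3 =
     (9*a - \<i> * complex_of_real (sqrt 3) * b) * (x1 + omega^2*x2 + omega*x3)^3
   + (9*a + \<i> * complex_of_real (sqrt 3) * b) * (x1 + omega*x2 + omega^2*x3)^3
   + 9*c * (x1 + x2 + x3)^3
   + 9*d * (x1 + omega*x2 + omega^2*x3) * (x1 + omega^2*x2 + omega*x3) * (x1 + x2 + x3)"
  unfolding cubicf_def i_sqrt3_eq_1_plus_2_omega using omega_squared_plus_omega_plus_1 by algebra

lemma completely_reducible_cubicf_imp:
  assumes "completely_reducible (cubicf a b c d)"
  shows "(a = 0 \<and> b = 0 \<and> c = 0) \<or> (27*a^2 + b^2)*c + d^3 = 0"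
proof -
  obtain u1 u2 u3 v1 v2 v3 w1 w2 w3 where F: "\<And>x1 x2 x3. cubicf a b c d x1 x2 x3
      = (u1*x1 + u2*x2 + u3*x3) * (v1*x1 + v2*x2 + v3*x3) * (w1*x1 + w2*x2 + w3*x3)"
    using assms unfolding completely_reducible_def by blast
  define k where "k = \<i> * complex_of_real (sqrt 3)"
  define P Q where "P = 9*a + k*b" "Q = 9*a - k*b"
  have H: "(3*P)*X^3 + (3*Q)*Y^3 + (27*c)*Z^3 + (27*d)*X*Y*Z
      = ((u1 + omega^2*u2 + omega*u3)*X + (u1 + omega*u2 + omega^2*u3)*Y + (u1 + u2 + u3)*Z)
      * ((v1 + omega^2*v2 + omega*v3)*X + (v1 + omega*v2 + omega^2*v3)*Y + (v1 + v2 + v3)*Z)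
      * ((w1 + omega^2*w2 + omega*w3)*X + (w1 + omega*w2 + omega^2*w3)*Y + (w1 + w2 + w3)*Z)"
    for X Y Z
  proof -
    obtain x1 x2 x3 where X: "x1 + omega*x2 + omega^2*x3 = X"
      and Y: "x1 + omega^2*x2 + omega*x3 = Y" and Z: "x1 + x2 + x3 = Z"
      using fourier_coordinates_surj by blast
    have "3 * (9 * cubicf a b c d x1 x2 x3) = (3*P)*X^3 + (3*Q)*Y^3 + (27*c)*Z^3 + (27*d)*X*Y*Z"
      unfolding cubicf_fourier_coordinates X Y Z P_Q_def k_def by (simp add: algebra_simps)
    moreover have "27 * cubicf a b c d x1 x2 x3
        = (3 * (u1*x1 + u2*x2 + u3*x3)) * (3 * (v1*x1 + v2*x2 + v3*x3)) * (3 * (w1*x1 + w2*x2 + w3*x3))"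
      unfolding F by algebra
    ultimately show ?thesis
      unfolding linear_form_fourier_coordinates X Y Z by simp
  qed
  have PQ: "(3*P) * (3*Q) = 27 * (27*a^2 + b^2)"
    unfolding P_Q_def using i_sqrt3_squared unfolding k_def[symmetric] by algebra
  from diagonal_cubic_product_condition[OF H] show ?thesis
  proof
    assume "3*P = 0 \<and> 3*Q = 0 \<and> 27*c = 0"
    moreover have "18*a = P + Q" "2*k*b = P - Q"
      unfolding P_Q_def by algebra+
    moreover have "k \<noteq> 0"
      using i_sqrt3_squared unfolding k_def[symmetric] by auto
    ultimately show ?thesis
      by simp
  next
    assume "27*(3*P)*(3*Q)*(27*c) + (27*d)^3 = 0"
    then have "19683 * ((27*a^2 + b^2)*c + d^3) = 0"
      using PQ by algebra
    then show ?thesis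
      by (simp only: mult_eq_0_iff) simp
  qed
qed

lemma cubicf_0_0_0:
  "cubicf 0 0 0 d x1 x2 x3
     = d * (x1 + x2 + x3) * (x1 + omega*x2 + omega^2*x3) * (x1 + omega^2*x2 + omega*x3)"
  unfolding cubicf_def using omega_squared_plus_omega_plus_1 by algebra

lemma cubicf_factorization:
  assumes "\<alpha>1^3 = 9*a - \<i> * complex_of_real (sqrt 3) * b"
    and "\<alpha>2^3 = 9*a + \<i> * complex_of_real (sqrt 3) * b"
    and "- \<alpha>1 * \<alpha>2 * \<gamma> = 3*d" and "\<gamma>^3 = 9*c"
  shows "9 * cubicf a b c d x1 x2 x3 =
      (\<alpha>1 * (x1 + omega^2*x2 + omega*x3) + \<gamma> * (x1 + x2 + x3) + \<alpha>2 * (x1 + omega*x2 + omega^2*x3))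
    * (\<alpha>1 * (omega^2*x1 + omega*x2 + x3) + \<gamma> * (x1 + x2 + x3) + \<alpha>2 * (omega*x1 + omega^2*x2 + x3))
    * (\<alpha>1 * (omega*x1 + x2 + omega^2*x3) + \<gamma> * (x1 + x2 + x3) + \<alpha>2 * (omega^2*x1 + x2 + omega*x3))"
proof -
  define X Y Z where "X = x1 + omega*x2 + omega^2*x3" "Y = x1 + omega^2*x2 + omega*x3"
    "Z = x1 + x2 + x3"
  have "9 * cubicf a b c d x1 x2 x3 = \<alpha>1^3*Y^3 + \<alpha>2^3*X^3 + \<gamma>^3*Z^3 + (9*d)*X*Y*Z"
    unfolding assms(1,2,4) X_Y_Z_def by (rule cubicf_fourier_coordinates)
  also have "9*d = - 3*\<alpha>1*\<alpha>2*\<gamma>"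
    using assms(3) by algebra
  also have "\<alpha>1^3*Y^3 + \<alpha>2^3*X^3 + \<gamma>^3*Z^3 + (- 3*\<alpha>1*\<alpha>2*\<gamma>)*X*Y*Z
      = \<alpha>2^3*X^3 + \<alpha>1^3*Y^3 + \<gamma>^3*Z^3 - 3*\<alpha>1*\<alpha>2*\<gamma>*X*Y*Z"
    by (simp add: algebra_simps)
  also have "\<dots> = (\<alpha>1*Y + \<gamma>*Z + \<alpha>2*X) * (omega^2*\<alpha>1*Y + \<gamma>*Z + omega*\<alpha>2*X)
      * (omega*\<alpha>1*Y + \<gamma>*Z + omega^2*\<alpha>2*X)"
    by (rule diagonal_cubic_factorization[OF omega_squared_plus_omega_plus_1])
  also have "omega^2*\<alpha>1*Y + \<gamma>*Z + omega*\<alpha>2*X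
      = \<alpha>1 * (omega^2*x1 + omega*x2 + x3) + \<gamma> * (x1 + x2 + x3) + \<alpha>2 * (omega*x1 + omega^2*x2 + x3)"
    unfolding X_Y_Z_def using omega_squared_plus_omega_plus_1 by algebra
  also have "omega*\<alpha>1*Y + \<gamma>*Z + omega^2*\<alpha>2*X
      = \<alpha>1 * (omega*x1 + x2 + omega^2*x3) + \<gamma> * (x1 + x2 + x3) + \<alpha>2 * (omega^2*x1 + x2 + omega*x3)"
    unfolding X_Y_Z_def using omega_squared_plus_omega_plus_1 by algebra
  finally show ?thesis
    unfolding X_Y_Z_def .
qed

lemma cubicf_factorization_parameters_exist:
  assumes "(27*a^2 + b^2)*c + d^3 = 0"
  shows "\<exists>\<alpha>1 \<alpha>2 \<gamma> :: complex.
    \<alpha>1^3 = 9*a - \<i> * complex_of_real (sqrt 3) * b \<and>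
    \<alpha>2^3 = 9*a + \<i> * complex_of_real (sqrt 3) * b \<and>
    - \<alpha>1 * \<alpha>2 * \<gamma> = 3*d \<and> \<gamma>^3 = 9*c"
proof -
  define k where "k = \<i> * complex_of_real (sqrt 3)"
  obtain e1 e2 where e1: "e1^3 = 9*a - k*b" and e2: "e2^3 = 9*a + k*b"
    using complex_nth_root_exists[of 3] by (metis zero_less_numeral)
  have prod: "(e1*e2)^3 = 3*(27*a^2 + b^2)"
    unfolding power_mult_distrib e1 e2 using i_sqrt3_squared unfolding k_def[symmetric] by algebra
  obtain g where "- e1 * e2 * g = 3*d" and "g^3 = 9*c"
  proof (cases "e1*e2 = 0")
    case True
    then have "3*(27*a^2 + b^2) = 0"
      using prod unfolding True by simp
    then have "27*a^2 + b^2 = 0"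
      by (simp only: mult_eq_0_iff) simp
    then have "d = 0"
      using assms by simp
    obtain g where "g^3 = 9*c"
      using complex_nth_root_exists[of 3] by (metis zero_less_numeral)
    with True \<open>d = 0\<close> show ?thesis
      using that by simp
  next
    case False
    define g where "g = -3*d / (e1*e2)"
    have g: "g * (e1*e2) = -3*d"
      using False unfolding g_def by simp
    have "g^3 * (e1*e2)^3 = (-3*d)^3"
      unfolding g[symmetric] by (simp add: power_mult_distrib)
    then have "g^3 * (3*(27*a^2 + b^2)) = 9*c * (3*(27*a^2 + b^2))"
      unfolding prod using assms by algebra
    moreover have "3*(27*a^2 + b^2) \<noteq> 0"
      using prod False by (metis mult_eq_0_iff power_not_zero)
    ultimately have "g^3 = 9*c"
      by simp
    moreover have "- e1 * e2 * g = 3*d"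
      using g by algebra
    ultimately show ?thesis
      using that by simp
  qed
  with e1 e2 show ?thesis
    unfolding k_def by blast
qed

lemma completely_reducible_if_scaled_product:
  fixes s :: complex
  assumes "s \<noteq> 0"
    and "\<And>x1 x2 x3. s * F x1 x2 x3
      = (u1*x1 + u2*x2 + u3*x3) * (v1*x1 + v2*x2 + v3*x3) * (w1*x1 + w2*x2 + w3*x3)"
  shows "completely_reducible F"
  unfolding completely_reducible_def
proof (intro exI allI)
  fix x1 x2 x3
  show "F x1 x2 x3 = ((u1/s)*x1 + (u2/s)*x2 + (u3/s)*x3)
      * (v1*x1 + v2*x2 + v3*x3) * (w1*x1 + w2*x2 + w3*x3)"
    using assms(2)[of x1 x2 x3] \<open>s \<noteq> 0\<close> by (simp add: field_simps)
qed

lemma completely_reducible_cubicf_if: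
  assumes "(a = 0 \<and> b = 0 \<and> c = 0) \<or> (27*a^2 + b^2)*c + d^3 = 0"
  shows "completely_reducible (cubicf a b c d)"
  using assms
proof
  assume "a = 0 \<and> b = 0 \<and> c = 0"
  then have "cubicf a b c d x1 x2 x3 = (d*x1 + d*x2 + d*x3) * (1*x1 + omega*x2 + omega^2*x3)
      * (1*x1 + omega^2*x2 + omega*x3)" for x1 x2 x3
    by (simp add: cubicf_0_0_0 distrib_left)
  then show ?thesis
    unfolding completely_reducible_def by blast
next
  assume "(27*a^2 + b^2)*c + d^3 = 0"
  then obtain \<alpha>1 \<alpha>2 \<gamma> where params:
    "\<alpha>1^3 = 9*a - \<i> * complex_of_real (sqrt 3) * b" "\<alpha>2^3 = 9*a + \<i> * complex_of_real (sqrt 3) * b"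
    "- \<alpha>1 * \<alpha>2 * \<gamma> = 3*d" "\<gamma>^3 = 9*c"
    using cubicf_factorization_parameters_exist by blast
  define e0 e1 e2 where "e0 = \<alpha>1 + \<gamma> + \<alpha>2" "e1 = \<alpha>1*omega + \<gamma> + \<alpha>2*omega^2"
    "e2 = \<alpha>1*omega^2 + \<gamma> + \<alpha>2*omega"
  have "9 * cubicf a b c d x1 x2 x3
      = (e0*x1 + e2*x2 + e1*x3) * (e2*x1 + e1*x2 + e0*x3) * (e1*x1 + e0*x2 + e2*x3)" for x1 x2 x3
  proof -
    have "\<alpha>1 * (x1 + omega^2*x2 + omega*x3) + \<gamma> * (x1 + x2 + x3) + \<alpha>2 * (x1 + omega*x2 + omega^2*x3)
        = e0*x1 + e2*x2 + e1*x3"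
      "\<alpha>1 * (omega^2*x1 + omega*x2 + x3) + \<gamma> * (x1 + x2 + x3) + \<alpha>2 * (omega*x1 + omega^2*x2 + x3)
        = e2*x1 + e1*x2 + e0*x3"
      "\<alpha>1 * (omega*x1 + x2 + omega^2*x3) + \<gamma> * (x1 + x2 + x3) + \<alpha>2 * (omega^2*x1 + x2 + omega*x3)
        = e1*x1 + e0*x2 + e2*x3"
      unfolding e0_e1_e2_def by (simp_all add: algebra_simps)
    then show ?thesis
      using cubicf_factorization[OF params] by simp
  qed
  then show ?thesis
    by (rule completely_reducible_if_scaled_product[rotated]) simp
qed

theorem theorem11p1:
  fixes a b c d :: complex
  shows "(completely_reducible (cubicf a b c d) \<longleftrightarrow>
            (a = 0 \<and> b = 0 \<and> c = 0) \<or> (27 * a^2 + b^2) * c + d^3 = 0)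
       \<and> (a = 0 \<and> b = 0 \<and> c = 0 \<longrightarrow>
            (\<forall>x1 x2 x3. cubicf a b c d x1 x2 x3 =
               d * (x1 + x2 + x3) * (x1 + omega * x2 + omega^2 * x3)
                 * (x1 + omega^2 * x2 + omega * x3)))
       \<and> ((27 * a^2 + b^2) * c + d^3 = 0 \<longrightarrow>
            (\<exists>\<alpha>1 \<alpha>2 \<gamma> :: complex.
               \<alpha>1^3 = 9*a - \<i> * complex_of_real (sqrt 3) * b \<and>
               \<alpha>2^3 = 9*a + \<i> * complex_of_real (sqrt 3) * b \<and>
               - \<alpha>1 * \<alpha>2 * \<gamma> = 3*d \<and> \<gamma>^3 = 9*c)
          \<and> (\<forall>\<alpha>1 \<alpha>2 \<gamma> :: complex.
               \<alpha>1^3 = 9*a - \<i> * complex_of_real (sqrt 3) * b \<and>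
               \<alpha>2^3 = 9*a + \<i> * complex_of_real (sqrt 3) * b \<and>
               - \<alpha>1 * \<alpha>2 * \<gamma> = 3*d \<and> \<gamma>^3 = 9*c \<longrightarrow>
               (\<forall>x1 x2 x3. 9 * cubicf a b c d x1 x2 x3 =
                  (\<alpha>1 * (x1 + omega^2 * x2 + omega * x3) + \<gamma> * (x1 + x2 + x3)
                     + \<alpha>2 * (x1 + omega * x2 + omega^2 * x3))
                * (\<alpha>1 * (omega^2 * x1 + omega * x2 + x3) + \<gamma> * (x1 + x2 + x3)
                     + \<alpha>2 * (omega * x1 + omega^2 * x2 + x3))
                * (\<alpha>1 * (omega * x1 + x2 + omega^2 * x3) + \<gamma> * (x1 + x2 + x3)
                     + \<alpha>2 * (omega^2 * x1 + x2 + omega * x3)))))"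
  by (intro conjI impI allI)
    (blast intro: completely_reducible_cubicf_if dest: completely_reducible_cubicf_imp,
     simp add: cubicf_0_0_0,
     erule cubicf_factorization_parameters_exist,
     blast intro: cubicf_factorization)

end
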